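(* Let $p\equiv1\pmod8$ and $q\equiv3\pmod8$ be primes with $\left(\frac pq\right)=1$, $\mathbb{K}=\mathbb{Q}(\sqrt2,\sqrt p,\sqrt q)$, and write $\varepsilon_{2pq}=x+y\sqrt{2pq}$, $\varepsilon_{pq}=v+w\sqrt{pq}$ with integers $x,y,v,w$. For $\eta\in\mathbb{K}$ and $\sigma\in\mathrm{Gal}(\mathbb{K}/\mathbb{Q})$ put $\eta^{1+\sigma}=\eta\sigma(\eta)$. Then $\varepsilon_{2pq}$ and $\varepsilon_{pq}$ are squares in $\mathbb{K}$ and, for either square root $\eta$ of $\varepsilon_{2pq}$ in $\mathbb{K}$, the values $(\eta^{1+\tau_2},\eta^{1+\tau_1\tau_2},\eta^{1+\tau_1\tau_3},\eta^{1+\tau_2\tau_3},\eta^{1+\tau_1})$ are: $(-1,-\varepsilon_{2pq},-\varepsilon_{2pq},\varepsilon_{2pq},1)$ if $x-1$ is a square in $\mathbb{N}$; $(1,\varepsilon_{2pq},-\varepsilon_{2pq},-\varepsilon_{2pq},1)$ if $p(x-1)$ is a square in $\mathbb{N}$; $(-1,-\varepsilon_{2pq},\varepsilon_{2pq},-\varepsilon_{2pq},1)$ if $2p(x+1)$ is a square in $\mathbb{N}$. For either square root $\eta$ of $\varepsilon_{pq}$ in $\mathbb{K}$, the same tuple equals: $(-1,1,1,\varepsilon_{pq},-\varepsilon_{pq})$ if $v-1$ is a square in $\mathbb{N}$; $(1,-1,1,-\varepsilon_{pq},-\varepsilon_{pq})$ if $p(v-1)$ is a square in $\mathbb{N}$;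 $(-1,-1,1,-\varepsilon_{pq},\varepsilon_{pq})$ if $2p(v+1)$ is a square in $\mathbb{N}$.
   Context: For squarefree $d>1$, $\varepsilon_d>1$ is the fundamental unit of $\mathbb{Q}(\sqrt d)$. Under the hypotheses, exactly one of $x-1$, $p(x-1)$, $2p(x+1)$ is a square in $\mathbb{N}$ and exactly one of $v-1$, $p(v-1)$, $2p(v+1)$ is. $\tau_1,\tau_2,\tau_3\in\mathrm{Gal}(\mathbb{K}/\mathbb{Q})$: $\tau_1$ sends $\sqrt2\mapsto-\sqrt2$ and fixes $\sqrt p,\sqrt q$; $\tau_2$ sends $\sqrt p\mapsto-\sqrt p$ and fixes $\sqrt2,\sqrt q$; $\tau_3$ sends $\sqrt q\mapsto-\sqrt q$ and fixes $\sqrt2,\sqrt p$. *)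

theory Defs
  imports "HOL-Computational_Algebra.Polynomial" "HOL-Number_Theory.Number_Theory"
begin

definition quad_field :: "nat \<Rightarrow> real set" where
  "quad_field d = {a + b * sqrt (real d) | a b. a \<in> \<rat> \<and> b \<in> \<rat>}"

definition quad_unit :: "nat \<Rightarrow> real \<Rightarrow> bool" where
  "quad_unit d u \<longleftrightarrow> u \<in> quad_field d \<and> u \<noteq> 0 \<and> algebraic_int u \<and> algebraic_int (inverse u)"

definition fund_unit :: "nat \<Rightarrow> real" where
  "fund_unit d = (THE e. quad_unit d e \<and> e > 1 \<and> (\<forall>u. quad_unit d u \<and> u > 1 \<longrightarrow> e \<le> u))"

definition triquad_field :: "nat \<Rightarrow> nat \<Rightarrow> real set" where
  "triquad_field p q = {a0 + a1 * sqrt 2 + a2 * sqrt (real p) + a3 * sqrt (real q)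
      + a4 * sqrt (2 * real p) + a5 * sqrt (2 * real q) + a6 * sqrt (real p * real q)
      + a7 * sqrt (2 * real p * real q)
     | a0 a1 a2 a3 a4 a5 a6 a7. a0 \<in> \<rat> \<and> a1 \<in> \<rat> \<and> a2 \<in> \<rat> \<and> a3 \<in> \<rat>
        \<and> a4 \<in> \<rat> \<and> a5 \<in> \<rat> \<and> a6 \<in> \<rat> \<and> a7 \<in> \<rat>}"

text \<open>Field automorphisms of K (automatically fixing Q).\<close>
definition field_aut :: "real set \<Rightarrow> (real \<Rightarrow> real) \<Rightarrow> bool" where
  "field_aut K \<sigma> \<longleftrightarrow> bij_betw \<sigma> K K \<and> \<sigma> 1 = 1 \<and>
     (\<forall>a\<in>K. \<forall>b\<in>K. \<sigma> (a + b) = \<sigma> a + \<sigma> b \<and> \<sigma> (a * b) = \<sigma> a * \<sigma> b)"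

definition is_nat_square :: "int \<Rightarrow> bool" where
  "is_nat_square z \<longleftrightarrow> (\<exists>n::nat. z = int n ^ 2)"

end

theory Submission
  imports Defs "HOL-Analysis.Kronecker_Approximation_Theorem" "HOL-Computational_Algebra.Nth_Powers"
begin

text \<open>For \<open>D \<in> {2pq, pq}\<close> the fundamental unit is \<open>\<epsilon> = x + y sqrt D\<close> with
  \<open>x^2 - D y^2 = 1\<close>; norm \<open>-1\<close> is impossible because \<open>q \<equiv> 3 (mod 4)\<close> divides \<open>D\<close>.
  Then \<open>\<epsilon> = (U + W)^2\<close> with \<open>U^2 = (x + 1)/2\<close>, \<open>W^2 = (x - 1)/2\<close> and
  \<open>2 U W = y sqrt D\<close>, and the coprime factorisation of \<open>(x + 1)(x - 1) = D y^2\<close> puts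
  \<open>U\<close> and \<open>W\<close> into \<open>K\<close>. Each square-class hypothesis makes \<open>U\<close> and \<open>W\<close> rational
  multiples of products of \<open>sqrt 2\<close>, \<open>sqrt p\<close>, \<open>sqrt q\<close>, on which every automorphism
  acts by a sign. If \<open>\<sigma> U = a U\<close> and \<open>\<sigma> W = b W\<close>, then
  \<open>\<eta> \<sigma>(\<eta>) = (U + W)(a U + b W)\<close> for either root \<open>\<eta> = \<plusminus>(U + W)\<close>, which is
  \<open>\<plusminus>\<epsilon>\<close> if \<open>a = b\<close> and \<open>\<plusminus>(U^2 - W^2) = \<plusminus>1\<close> otherwise.\<close>

section \<open>Algebraic integers in real quadratic fields\<close>

lemma sqrt_of_nat_in_Rats_imp_square:
  assumes "sqrt (real n) \<in> \<rat>"
  shows "\<exists>m::nat. n = m^2"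
proof -
  from assms obtain m k :: nat where k: "k \<noteq> 0" and mk: "\<bar>sqrt (real n)\<bar> = real m / real k"
    and cop: "coprime m k"
    by (rule Rats_abs_nat_div_natE)
  have "sqrt (real n) * real k = real m" using mk k by (simp add: field_simps)
  hence "real n * real k ^ 2 = real m ^ 2"
    by (metis of_nat_0_le_iff power_mult_distrib real_sqrt_pow2)
  hence eq: "n * k^2 = m^2" by (metis of_nat_eq_iff of_nat_mult of_nat_power)
  hence "k^2 dvd m^2" by (metis dvd_triv_right)
  moreover have "coprime (k^2) (m^2)" using cop by (simp add: coprime_commute)
  ultimately have "k^2 dvd 1" by (metis coprime_common_divisor dvd_refl)
  hence "k = 1" by simp
  thus ?thesis using eq by auto
qed

lemma sqrt_notin_Rats_if_simple_prime_factor: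
  fixes r d :: nat
  assumes "prime r" "r dvd d" "\<not> r^2 dvd d"
  shows "sqrt (real d) \<notin> \<rat>"
proof
  assume "sqrt (real d) \<in> \<rat>"
  then obtain m where m: "d = m^2" using sqrt_of_nat_in_Rats_imp_square by blast
  hence "r dvd m" using assms prime_dvd_power by blast
  thus False using assms m by simp
qed

lemma map_poly_of_int_add:
  "map_poly (of_int :: int \<Rightarrow> 'a::ring_1) (p + q) = map_poly of_int p + map_poly of_int q"
  by (intro poly_eqI) (simp add: coeff_map_poly)

lemma map_poly_of_int_mult:
  "map_poly (of_int :: int \<Rightarrow> 'a::comm_ring_1) (p * q) = map_poly of_int p * map_poly of_int q"
proof (induction p)
  case (pCons a p)
  show ?case
    by (simp add: map_poly_of_int_add map_poly_smult map_poly_pCons pCons.IH)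
qed simp

lemma poly_eq_pCons_if_degree_le_1:
  assumes "degree r \<le> 1"
  shows "r = [:Polynomial.coeff r 0, Polynomial.coeff r 1:]"
  using assms by (intro poly_eqI) (auto simp: coeff_pCons coeff_eq_0 split: nat.splits)

lemma int_poly_eq_0_if_degree_le_1_irrational_root:
  fixes u :: real
  assumes "u \<notin> \<rat>" "degree r \<le> 1" "poly (map_poly of_int r) u = 0"
  shows "r = 0"
proof -
  define c0 c1 where "c0 = Polynomial.coeff r 0" and "c1 = Polynomial.coeff r 1"
  have r: "r = [:c0, c1:]" unfolding c0_def c1_def using assms(2) by (rule poly_eq_pCons_if_degree_le_1)
  hence lin: "of_int c0 + of_int c1 * u = 0" using assms(3) by (simp add: map_poly_pCons mult.commute)
  have "c1 = 0"
  proof (rule ccontr)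
    assume "c1 \<noteq> 0"
    hence "u = - of_int c0 / of_int c1" using lin by (simp add: field_simps)
    thus False using assms(1) by simp
  qed
  thus ?thesis using lin r by simp
qed

lemma lead_coeff_eq_1_if_primitive_factor_of_monic:
  fixes P m q :: "int poly" and c :: int
  assumes "lead_coeff P = 1" "Polynomial.content m = 1" "lead_coeff m > 0" "c > 0" "Polynomial.smult c P = m * q"
  shows "lead_coeff m = 1"
proof -
  have "Polynomial.content P dvd 1" using content_dvd_coeff[of P "degree P"] assms(1) by simp
  hence "Polynomial.content P = 1" using normalize_content[of P] by (simp add: zdvd1_eq)
  hence "Polynomial.content (Polynomial.smult c P) = c" using assms(4) by simp
  hence "Polynomial.content q = c" using assms(2,5) by (simp add: content_mult)
  hence "Polynomial.smult c P = Polynomial.smult c (m * primitive_part q)"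
    using assms(5) content_times_primitive_part[of q] by (metis mult_smult_right)
  hence "P = m * primitive_part q" using assms(4) by (metis less_irrefl smult_cancel)
  hence "lead_coeff m * lead_coeff (primitive_part q) = 1" using assms(1) by (simp add: lead_coeff_mult)
  thus ?thesis using assms(3) by (metis pos_zmult_eq_1_iff)
qed

text \<open>Pseudo-division of a monic annihilating polynomial of \<open>u\<close> by \<open>m\<close> leaves a linear remainder
  vanishing at the irrational \<open>u\<close>; so \<open>m\<close> divides a constant multiple of a monic integer polynomial,
  and Gauss's lemma makes \<open>m\<close> monic.\<close>
lemma primitive_quadratic_annihilator_monic:
  fixes m :: "int poly" and u :: real
  assumes irr: "u \<notin> \<rat>" and ai: "algebraic_int u" and m: "poly (map_poly of_int m) u = 0"
    and dm: "degree m = 2" and cm: "Polynomial.content m = 1" and lc: "lead_coeff m > 0"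
  shows "lead_coeff m = 1"
proof -
  obtain P where P: "poly (map_poly of_int P) u = 0" "lead_coeff P = 1"
    using ai unfolding algebraic_int_altdef_ipoly by blast
  obtain q r where qr: "pseudo_divmod P m = (q, r)" by (metis surj_pair)
  define k where "k = Suc (degree P) - degree m"
  have mnz: "m \<noteq> 0" using dm by auto
  have pd: "Polynomial.smult (lead_coeff m ^ k) P = m * q + r"
    using pseudo_divmod(1)[OF mnz qr] unfolding k_def .
  have "poly (map_poly of_int (Polynomial.smult (lead_coeff m ^ k) P)) u = 0"
    by (simp add: map_poly_smult P)
  hence "poly (map_poly of_int r) u = 0"
    unfolding pd by (simp add: map_poly_of_int_add map_poly_of_int_mult m)
  moreover have "degree r \<le> 1" using pseudo_divmod(2)[OF mnz qr] dm by auto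
  ultimately have "r = 0" using irr by (intro int_poly_eq_0_if_degree_le_1_irrational_root)
  hence "Polynomial.smult (lead_coeff m ^ k) P = m * q" using pd by simp
  thus ?thesis
    using lead_coeff_eq_1_if_primitive_factor_of_monic[OF P(2) cm lc] lc by (metis zero_less_power)
qed

lemma algebraic_int_quadratic_coeffs_Ints:
  fixes u t N :: real
  assumes irr: "u \<notin> \<rat>" and t: "t \<in> \<rat>" and N: "N \<in> \<rat>"
    and root: "u^2 - t * u + N = 0" and ai: "algebraic_int u"
  shows "t \<in> \<int> \<and> N \<in> \<int>"
proof -
  obtain t1 t2 where t12: "t2 > 0" "t = of_int t1 / of_int t2" using t by (rule Rats_cases') auto
  obtain n1 n2 where n12: "n2 > 0" "N = of_int n1 / of_int n2" using N by (rule Rats_cases') auto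
  define m0 :: "int poly" where "m0 = [: n1 * t2, -(t1 * n2), t2 * n2 :]"
  define c where "c = Polynomial.content m0"
  define m where "m = primitive_part m0"
  have m0nz: "m0 \<noteq> 0" and dm: "degree m = 2"
    using t12 n12 by (simp_all add: m0_def m_def)
  have m0m: "m0 = Polynomial.smult c m" unfolding c_def m_def by simp
  have cpos: "c > 0"
    using m0nz normalize_content[of m0] unfolding c_def
    by (metis content_eq_zero_iff abs_ge_zero normalize_int_def order_le_neq_trans)
  have coeff_m0: "Polynomial.coeff m0 i = c * Polynomial.coeff m i" for i using m0m by simp
  have coeffs: "n1 * t2 = c * Polynomial.coeff m 0" "-(t1 * n2) = c * Polynomial.coeff m 1"
    "t2 * n2 = c * Polynomial.coeff m 2"
    using coeff_m0[of 0] coeff_m0[of 1] coeff_m0[of 2] by (simp_all add: m0_def numeral_2_eq_2)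
  have "0 < c * Polynomial.coeff m 2" using coeffs(3) t12(1) n12(1) by (metis mult_pos_pos)
  hence lc_pos: "lead_coeff m > 0" using dm cpos zero_less_mult_pos by simp
  have "real_of_int t1 = t * of_int t2" "real_of_int n1 = N * of_int n2"
    using t12 n12 by simp_all
  hence "poly (map_poly of_int m0) u = of_int t2 * of_int n2 * (u^2 - t * u + N)"
    by (simp add: m0_def map_poly_pCons algebra_simps power2_eq_square)
  hence "poly (map_poly of_int m) u = 0"
    using root cpos by (simp add: m0m map_poly_smult)
  moreover have "Polynomial.content m = 1" using m0nz by (simp add: m_def)
  ultimately have "lead_coeff m = 1"
    using primitive_quadratic_annihilator_monic[OF irr ai _ dm _ lc_pos] by simp
  hence "c = t2 * n2" using coeffs(3) dm by simp
  hence "t2 * n1 = t2 * (n2 * Polynomial.coeff m 0)" "n2 * (- t1) = n2 * (t2 * Polynomial.coeff m 1)"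
    using coeffs(1,2) by (simp_all add: algebra_simps)
  hence "n1 = n2 * Polynomial.coeff m 0" "t1 = - (t2 * Polynomial.coeff m 1)"
    using t12(1) n12(1) by (metis less_irrefl mult_cancel_left, metis less_irrefl mult_cancel_left minus_equation_iff)
  hence "N = of_int (Polynomial.coeff m 0)" and "t = - of_int (Polynomial.coeff m 1)"
    using t12 n12 by simp_all
  thus ?thesis by simp
qed

lemma algebraic_int_quad_trace_norm_Ints:
  fixes a b :: real and d :: nat
  assumes irr: "sqrt (real d) \<notin> \<rat>" and ab: "a \<in> \<rat>" "b \<in> \<rat>"
    and ai: "algebraic_int (a + b * sqrt (real d))"
  shows "2 * a \<in> \<int> \<and> a^2 - real d * b^2 \<in> \<int>"
proof (cases "b = 0")
  case True
  hence "a \<in> \<int>" using ai ab rational_algebraic_int_is_int by simp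
  thus ?thesis using True by simp
next
  case False
  have "a + b * sqrt (real d) \<notin> \<rat>"
  proof
    assume "a + b * sqrt (real d) \<in> \<rat>"
    hence "(a + b * sqrt (real d) - a) / b \<in> \<rat>" using ab by (intro Rats_divide Rats_diff)
    moreover have "(a + b * sqrt (real d) - a) / b = sqrt (real d)" using False by simp
    ultimately show False using irr by simp
  qed
  moreover have "(a + b * sqrt (real d))^2 - 2 * a * (a + b * sqrt (real d)) + (a^2 - real d * b^2) = 0"
    by (simp add: algebra_simps power2_eq_square)
  ultimately show ?thesis using ab ai by (intro algebraic_int_quadratic_coeffs_Ints) auto
qed

lemma Ints_inverse_imp_abs_eq_1:
  fixes x :: real
  assumes "x \<in> \<int>" "1 / x \<in> \<int>" "x \<noteq> 0"
  shows "\<bar>x\<bar> = 1"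
proof -
  obtain i j where ij: "x = of_int i" "1 / x = of_int j" using assms(1,2) by (auto elim!: Ints_cases)
  hence "of_int (i * j) = (1::real)" using assms(3) by (simp add: field_simps)
  hence "i * j = 1" by (metis of_int_eq_1_iff)
  thus ?thesis using ij(1) by (auto simp: zmult_eq_1_iff)
qed

lemma quad_unit_norm:
  fixes d :: nat and u :: real
  assumes irr: "sqrt (real d) \<notin> \<rat>" and un: "quad_unit d u"
  obtains a b where "a \<in> \<rat>" "b \<in> \<rat>" "u = a + b * sqrt (real d)"
    "\<bar>a^2 - real d * b^2\<bar> = 1" "2 * a \<in> \<int>"
proof -
  from un obtain a b where ab: "a \<in> \<rat>" "b \<in> \<rat>" "u = a + b * sqrt (real d)"
    unfolding quad_unit_def quad_field_def by blast
  have unz: "u \<noteq> 0" and ai: "algebraic_int u" and aii: "algebraic_int (inverse u)"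
    using un unfolding quad_unit_def by auto
  define N where "N = a^2 - real d * b^2"
  have Nnz: "N \<noteq> 0"
  proof
    assume N0: "N = 0"
    show False
    proof (cases "b = 0")
      case True
      thus False using N0 unz ab(3) unfolding N_def by simp
    next
      case False
      hence "sqrt (real d) = \<bar>a / b\<bar>"
        using N0 unfolding N_def by (simp add: field_simps real_sqrt_abs[symmetric] power_divide)
      thus False using irr ab by simp
    qed
  qed
  have "u * (a - b * sqrt (real d)) = N" unfolding N_def ab(3)
    by (simp add: algebra_simps power2_eq_square)
  hence inv: "inverse u = a / N + (- b / N) * sqrt (real d)"
    using unz Nnz by (simp add: field_simps)
  have int_u: "2 * a \<in> \<int>" "N \<in> \<int>"
    using algebraic_int_quad_trace_norm_Ints[OF irr ab(1,2)] ai ab(3) unfolding N_def by auto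
  have "N \<in> \<rat>" using ab unfolding N_def by simp
  hence "(a / N)^2 - real d * (- b / N)^2 \<in> \<int>"
    using algebraic_int_quad_trace_norm_Ints[OF irr, of "a / N" "- b / N"] aii inv ab by simp
  moreover have "(a / N)^2 - real d * (- b / N)^2 = N / N^2"
    unfolding N_def by (simp add: power_divide diff_divide_distrib)
  hence "(a / N)^2 - real d * (- b / N)^2 = 1 / N"
    using Nnz by (simp add: power2_eq_square)
  ultimately have "\<bar>N\<bar> = 1" using Ints_inverse_imp_abs_eq_1 int_u(2) Nnz by simp
  thus ?thesis using that ab int_u unfolding N_def by blast
qed

section \<open>Pell's equation and the fundamental unit\<close>

lemma infinite_good_rational_approximations:
  fixes \<theta> :: real
  assumes irr: "\<theta> \<notin> \<rat>"
  shows "infinite {(h::int, k::int). 0 < k \<and> \<bar>of_int k * \<theta> - of_int h\<bar> < 1 / of_int k}"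
    (is "infinite ?S")
proof
  assume fin: "finite ?S"
  have dirichlet: "\<exists>h k. (h, k) \<in> ?S \<and> \<bar>of_int k * \<theta> - of_int h\<bar> < 1 / real N"
    if N: "N > 0" for N
  proof -
    obtain h k where hk: "0 < k" "k \<le> int N" "\<bar>of_int k * \<theta> - of_int h\<bar> < 1 / real N"
      using Dirichlet_approx[OF N] by blast
    have "1 / real N \<le> 1 / of_int k" using hk by (simp add: frac_le)
    hence "\<bar>of_int k * \<theta> - of_int h\<bar> < 1 / of_int k" using hk(3) by linarith
    thus ?thesis using hk by blast
  qed
  have nz: "of_int k * \<theta> - of_int h \<noteq> 0" if "k > 0" for h k :: int
  proof
    assume "of_int k * \<theta> - of_int h = 0"
    hence "\<theta> = of_int h / of_int k" using that by (simp add: field_simps)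
    thus False using irr by simp
  qed
  define \<delta> where "\<delta> = Min ((\<lambda>(h, k). \<bar>of_int k * \<theta> - of_int h\<bar>) ` ?S)"
  have "?S \<noteq> {}" using dirichlet[of 1] by auto
  hence \<delta>_pos: "\<delta> > 0" unfolding \<delta>_def using fin nz by auto
  obtain N :: nat where N: "1 / \<delta> < real N" using reals_Archimedean2 by blast
  hence "N > 0" using \<delta>_pos by (cases "N = 0") auto
  then obtain h k where hk: "(h, k) \<in> ?S" "\<bar>of_int k * \<theta> - of_int h\<bar> < 1 / real N"
    using dirichlet by blast
  have "\<delta> \<le> \<bar>of_int k * \<theta> - of_int h\<bar>" unfolding \<delta>_def using fin hk(1) by (intro Min_le) auto
  moreover have "1 / real N < \<delta>" using N \<delta>_pos \<open>N > 0\<close> by (simp add: field_simps)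
  ultimately show False using hk(2) by simp
qed

lemma pell_form_nonzero:
  fixes d :: nat and h k :: int
  assumes "sqrt (real d) \<notin> \<rat>" "k \<noteq> 0"
  shows "h^2 - int d * k^2 \<noteq> 0"
proof
  assume "h^2 - int d * k^2 = 0"
  hence "real d = (of_int h / of_int k)^2" using assms(2) by (simp add: field_simps flip: of_int_power)
  hence "sqrt (real d) = \<bar>of_int h / of_int k\<bar>" by simp
  thus False using assms(1) by simp
qed

lemma good_approximation_pell_form_bound:
  fixes d :: nat and h k :: int
  assumes k: "0 < k" "\<bar>of_int k * sqrt (real d) - of_int h\<bar> < 1 / of_int k"
  shows "\<bar>h^2 - int d * k^2\<bar> \<le> \<lceil>1 + 2 * sqrt (real d)\<rceil>"
proof -
  define e where "e = of_int k * sqrt (real d) - of_int h"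
  have eq: "of_int (h^2 - int d * k^2) = e * (e - 2 * of_int k * sqrt (real d))"
    unfolding e_def by (simp add: algebra_simps power2_eq_square)
  have k1: "real_of_int k \<ge> 1" using k by simp
  have ek: "\<bar>e\<bar> * of_int k < 1" using k(2) k1 unfolding e_def by (simp add: field_simps)
  hence e1: "\<bar>e\<bar> < 1" using k1 by (metis abs_ge_zero less_le_trans mult_le_cancel_left1 not_le)
  have "\<bar>e - 2 * of_int k * sqrt (real d)\<bar> \<le> \<bar>e\<bar> + \<bar>2 * of_int k * sqrt (real d)\<bar>"
    by (rule abs_triangle_ineq4)
  hence "\<bar>e - 2 * of_int k * sqrt (real d)\<bar> \<le> \<bar>e\<bar> + 2 * of_int k * sqrt (real d)"
    using k(1) by simp
  hence "\<bar>of_int (h^2 - int d * k^2)\<bar> \<le> \<bar>e\<bar> * (\<bar>e\<bar> + 2 * of_int k * sqrt (real d))"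
    unfolding eq abs_mult by (intro mult_left_mono) simp_all
  also have "\<dots> = \<bar>e\<bar> * \<bar>e\<bar> + 2 * sqrt (real d) * (\<bar>e\<bar> * of_int k)" by (simp add: algebra_simps)
  also have "\<dots> \<le> 1 + 2 * sqrt (real d)"
  proof -
    have "\<bar>e\<bar> * \<bar>e\<bar> \<le> 1" using e1 by (intro mult_le_one) auto
    moreover have "2 * sqrt (real d) * (\<bar>e\<bar> * of_int k) \<le> 2 * sqrt (real d)"
      using ek by (intro mult_left_le) auto
    ultimately show ?thesis by linarith
  qed
  finally show ?thesis by linarith
qed

text \<open>Two distinct solutions of \<open>h^2 - d k^2 = n\<close> that agree modulo \<open>n\<close> have a quotient
  \<open>(h\<^sub>1 + k\<^sub>1 sqrt d) / (h\<^sub>2 + k\<^sub>2 sqrt d)\<close> with integral coordinates.\<close>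
lemma pell_solution_from_congruent_pair:
  fixes d :: nat and h1 k1 h2 k2 n :: int
  assumes nd1: "h1^2 - int d * k1^2 = n" and nd2: "h2^2 - int d * k2^2 = n" and "n \<noteq> 0"
    and "n dvd h2 - h1" "n dvd k2 - k1" and kpos: "0 < k1" "0 < k2" and "(h1, k1) \<noteq> (h2, k2)"
  shows "\<exists>X Y. 0 < X \<and> 0 < Y \<and> X^2 - int d * Y^2 = 1"
proof -
  obtain \<alpha> \<beta> where h2: "h2 = h1 + n * \<alpha>" and k2: "k2 = k1 + n * \<beta>"
    using assms(4,5) by (metis add.commute diff_add_cancel dvdE)
  define X where "X = 1 + \<alpha> * h1 - int d * \<beta> * k1"
  define Y where "Y = \<alpha> * k1 - \<beta> * h1"
  have nX: "n * X = h1 * h2 - int d * k1 * k2"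
    unfolding X_def h2 k2 nd1[symmetric] by (simp add: algebra_simps power2_eq_square)
  have nY: "n * Y = h2 * k1 - h1 * k2" unfolding Y_def h2 k2 by (simp add: algebra_simps)
  have "(n * X)^2 - int d * (n * Y)^2 = (h1^2 - int d * k1^2) * (h2^2 - int d * k2^2)"
    unfolding nX nY by (simp add: algebra_simps power2_eq_square)
  hence "n * n * (X^2 - int d * Y^2) = n * n * 1"
    unfolding nd1 nd2 by (simp add: algebra_simps power2_eq_square)
  hence XY: "X^2 - int d * Y^2 = 1" using \<open>n \<noteq> 0\<close> by simp
  have "Y \<noteq> 0"
  proof
    assume "Y = 0"
    hence hk: "h2 * k1 = h1 * k2" using nY by simp
    have "n * k2^2 = (h1 * k2)^2 - int d * k1^2 * k2^2" unfolding nd1[symmetric] by (simp add: algebra_simps power2_eq_square)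
    also have "\<dots> = n * k1^2" unfolding hk[symmetric] nd2[symmetric] by (simp add: algebra_simps power2_eq_square)
    finally have "k2^2 = k1^2" using \<open>n \<noteq> 0\<close> by simp
    hence "k2 = k1" using kpos power2_eq_iff_nonneg[of k2 k1] by simp
    thus False using hk kpos assms(8) by simp
  qed
  moreover have "X \<noteq> 0"
  proof
    assume "X = 0"
    hence "- (int d * Y^2) = 1" using XY by simp
    moreover have "int d * Y^2 \<ge> 0" by simp
    ultimately show False by linarith
  qed
  ultimately show ?thesis using XY by (intro exI[of _ "\<bar>X\<bar>"] exI[of _ "\<bar>Y\<bar>"]) auto
qed

text \<open>Infinitely many good approximations \<open>h/k\<close> of \<open>sqrt d\<close> have norm \<open>h^2 - d k^2\<close> of bounded size,
  so by pigeonhole two of them share the norm \<open>n\<close> and their residues modulo \<open>n\<close>.\<close>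
lemma pell_exists:
  fixes d :: nat
  assumes irr: "sqrt (real d) \<notin> \<rat>"
  shows "\<exists>X Y::int. 0 < X \<and> 0 < Y \<and> X^2 - int d * Y^2 = 1"
proof -
  define S where "S = {(h::int, k::int). 0 < k \<and> \<bar>of_int k * sqrt (real d) - of_int h\<bar> < 1 / of_int k}"
  define M where "M = \<lceil>1 + 2 * sqrt (real d)\<rceil>"
  define nrm where "nrm = (\<lambda>(h::int, k::int). h^2 - int d * k^2)"
  define f where "f = (\<lambda>hk. (nrm hk, fst hk mod nrm hk, snd hk mod nrm hk))"
  have bound: "\<bar>nrm hk\<bar> \<le> M" "nrm hk \<noteq> 0" if "hk \<in> S" for hk
    using that good_approximation_pell_form_bound pell_form_nonzero[OF irr]
    unfolding S_def M_def nrm_def by auto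
  have "f ` S \<subseteq> {-M..M} \<times> {-M..M} \<times> {-M..M}"
  proof (rule image_subsetI)
    fix hk assume "hk \<in> S"
    obtain h k where "hk = (h, k)" by fastforce
    with bound \<open>hk \<in> S\<close> have "\<bar>nrm (h, k)\<bar> \<le> M" "\<bar>h mod nrm (h, k)\<bar> < \<bar>nrm (h, k)\<bar>" "\<bar>k mod nrm (h, k)\<bar> < \<bar>nrm (h, k)\<bar>"
      by (simp_all add: abs_mod_less)
    thus "f hk \<in> {-M..M} \<times> {-M..M} \<times> {-M..M}" unfolding f_def \<open>hk = (h, k)\<close> by auto
  qed
  hence "finite (f ` S)" by (rule finite_subset) auto
  moreover have "infinite S" unfolding S_def using irr by (intro infinite_good_rational_approximations) simp
  ultimately obtain a where a: "a \<in> S" "infinite {b\<in>S. f b = f a}" using pigeonhole_infinite by blast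
  have "{b\<in>S. f b = f a} \<noteq> {a}" using a(2) by (metis finite.emptyI finite_insert)
  then obtain b where b: "b \<in> S" "f b = f a" "b \<noteq> a" using a(1) by blast
  obtain h1 k1 h2 k2 where ab: "a = (h1, k1)" "b = (h2, k2)" by fastforce
  have "nrm a = nrm b" "h2 mod nrm a = h1 mod nrm a" "k2 mod nrm a = k1 mod nrm a"
    using b(2) unfolding ab f_def by auto
  thus ?thesis using a(1) b(1,3) bound[OF a(1)] unfolding ab
    by (intro pell_solution_from_congruent_pair[of h1 d k1 "nrm (h1, k1)" h2 k2])
       (auto simp: nrm_def S_def mod_eq_dvd_iff)
qed

lemma quad_unit_of_pell:
  fixes X Y :: int and d :: nat
  assumes "X^2 - int d * Y^2 = 1" "0 < X" "0 < Y"
  shows "quad_unit d (X + Y * sqrt (real d))"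
proof -
  define P :: "real poly" where "P = [:1, -2 * X, 1:]"
  have XY: "(real_of_int X)^2 - real d * (real_of_int Y)^2 = 1"
    using arg_cong[OF assms(1), of real_of_int] by simp
  have "(X + Y * sqrt (real d)) * (X - Y * sqrt (real d)) = 1"
    using XY by (simp add: algebra_simps power2_eq_square)
  hence inv: "inverse (X + Y * sqrt (real d)) = X - Y * sqrt (real d)"
    by (simp add: inverse_unique)
  have P: "\<forall>i. Polynomial.coeff P i \<in> \<int>" "lead_coeff P = 1"
    unfolding P_def by (auto simp: coeff_pCons split: nat.splits)
  have "poly P (X + Y * sqrt (real d)) = 0" "poly P (X - Y * sqrt (real d)) = 0"
    unfolding P_def using XY by (simp_all add: algebra_simps power2_eq_square)
  hence "algebraic_int (X + Y * sqrt (real d))" "algebraic_int (inverse (X + Y * sqrt (real d)))"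
    unfolding inv using P by (auto intro: algebraic_int.intros)
  moreover have "X + Y * sqrt (real d) \<in> quad_field d" unfolding quad_field_def by force
  moreover have "X + Y * sqrt (real d) > 0" using assms by (simp add: add_pos_nonneg)
  ultimately show ?thesis unfolding quad_unit_def by simp
qed

text \<open>A unit \<open>u > 1\<close> and its conjugate \<open>\<plusminus>1/u\<close> are the roots of \<open>X^2 - t X + N\<close> with
  integral \<open>t\<close> and \<open>N = \<plusminus>1\<close>, so \<open>u\<close> is determined by \<open>(t, N)\<close>, and \<open>\<bar>t\<bar> < u + 1\<close>.\<close>
lemma finite_quad_units_bounded:
  fixes d :: nat
  assumes irr: "sqrt (real d) \<notin> \<rat>"
  shows "finite {u. quad_unit d u \<and> 1 < u \<and> u \<le> B}"
proof -
  define M :: int where "M = \<lceil>B\<rceil> + 1"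
  define g where "g = (\<lambda>(t::int, N::int). (of_int t + sqrt (of_int t^2 - 4 * of_int N)) / (2::real))"
  have "{u. quad_unit d u \<and> 1 < u \<and> u \<le> B} \<subseteq> g ` ({-M..M} \<times> {1, -1})"
  proof clarify
    fix u assume un: "quad_unit d u" and u: "1 < u" "u \<le> B"
    obtain a b where ab: "u = a + b * sqrt (real d)" "\<bar>a^2 - real d * b^2\<bar> = 1" "2 * a \<in> \<int>"
      using quad_unit_norm[OF irr un] by blast
    obtain t where t: "2 * a = of_int t" using ab(3) by (auto elim: Ints_cases)
    define N :: int where "N = (if a^2 - real d * b^2 = 1 then 1 else -1)"
    define v where "v = a - b * sqrt (real d)"
    have "of_int N = a^2 - real d * b^2"
      using ab(2) unfolding N_def by (cases "a^2 - real d * b^2 \<ge> 0") auto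
    hence uv: "u * v = of_int N" unfolding v_def ab(1) by (simp add: algebra_simps power2_eq_square)
    hence "\<bar>u\<bar> * \<bar>v\<bar> = 1" unfolding N_def abs_mult[symmetric] by simp
    hence "\<bar>v\<bar> = 1 / u" using u by (simp add: field_simps)
    hence v: "\<bar>v\<bar> < 1" using u by simp
    have tuv: "of_int t = u + v" using t unfolding v_def ab(1) by simp
    have "(u - v)^2 = of_int t^2 - 4 * of_int N" unfolding tuv uv[symmetric]
      by (simp add: algebra_simps power2_eq_square)
    moreover have "u - v \<ge> 0" using u v by linarith
    ultimately have "sqrt (of_int t^2 - 4 * of_int N) = u - v" by (metis real_sqrt_abs abs_of_nonneg)
    hence "u = g (t, N)" using tuv unfolding g_def by simp
    moreover have "t \<in> {-M..M}"
    proof -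
      have "0 < real_of_int t" "real_of_int (t - 1) < B" using tuv v u by auto
      thus ?thesis using less_ceiling_iff[of "t - 1" B] unfolding M_def by simp
    qed
    ultimately show "u \<in> g ` ({-M..M} \<times> {1, -1})" unfolding N_def by force
  qed
  thus ?thesis by (rule finite_subset) auto
qed

lemma fund_unit_quad_unit_gt_1:
  fixes d :: nat
  assumes irr: "sqrt (real d) \<notin> \<rat>"
  shows "quad_unit d (fund_unit d)" "1 < fund_unit d"
proof -
  obtain X Y :: int where XY: "0 < X" "0 < Y" "X^2 - int d * Y^2 = 1" using pell_exists[OF irr] by blast
  define u0 where "u0 = X + Y * sqrt (real d)"
  have "quad_unit d u0" unfolding u0_def using quad_unit_of_pell XY by blast
  moreover have "1 < u0"
  proof -
    have "d > 0" using irr by (cases "d = 0") auto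
    hence "real_of_int X \<ge> 1" "real_of_int Y * sqrt (real d) > 0" using XY by auto
    thus ?thesis unfolding u0_def by linarith
  qed
  ultimately have u0S: "u0 \<in> {u. quad_unit d u \<and> 1 < u \<and> u \<le> u0}" by simp
  define S where "S = {u. quad_unit d u \<and> 1 < u \<and> u \<le> u0}"
  define e where "e = Min S"
  have fin: "finite S" unfolding S_def using irr by (rule finite_quad_units_bounded)
  have "e \<in> S" unfolding e_def using fin u0S S_def by (intro Min_in) auto
  hence e: "quad_unit d e" "1 < e" unfolding S_def by auto
  have least: "e \<le> u" if "quad_unit d u" "1 < u" for u
    using that Min_le[OF fin] \<open>e \<in> S\<close> unfolding e_def S_def by (cases "u \<le> u0") auto
  have "fund_unit d = e" unfolding fund_unit_def
    using e least by (intro the_equality) (auto intro: order.antisym)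
  thus "quad_unit d (fund_unit d)" "1 < fund_unit d" using e by simp_all
qed

lemma fund_unit_pell_coordinates:
  fixes d :: nat and x y :: int
  assumes irr: "sqrt (real d) \<notin> \<rat>" and no_neg: "x^2 - int d * y^2 \<noteq> -1"
    and fu: "fund_unit d = of_int x + of_int y * sqrt (real d)"
  shows "x^2 - int d * y^2 = 1" "2 \<le> x" "1 \<le> y"
proof -
  obtain a b where ab: "a \<in> \<rat>" "b \<in> \<rat>" "fund_unit d = a + b * sqrt (real d)"
    "\<bar>a^2 - real d * b^2\<bar> = 1"
    using quad_unit_norm[OF irr fund_unit_quad_unit_gt_1(1)[OF irr]] by blast
  have "b = of_int y"
  proof (rule ccontr)
    assume ne: "b \<noteq> of_int y"
    have "sqrt (real d) = (of_int x - a) / (b - of_int y)"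
      using ab(3) fu ne by (simp add: field_simps)
    thus False using irr ab by simp
  qed
  hence "a = of_int x" using ab(3) fu by simp
  hence "\<bar>of_int (x^2 - int d * y^2)\<bar> = (1::real)" using ab(4) \<open>b = of_int y\<close> by simp
  hence "\<bar>x^2 - int d * y^2\<bar> = 1" by (metis of_int_abs of_int_eq_1_iff)
  hence N: "x^2 - int d * y^2 = 1" using no_neg by (auto simp: abs_if split: if_splits)
  thus "x^2 - int d * y^2 = 1" .
  define e where "e = fund_unit d"
  define e' where "e' = real_of_int x - real_of_int y * sqrt (real d)"
  have "e * e' = 1" unfolding e_def e'_def fu using arg_cong[OF N, of real_of_int]
    by (simp add: algebra_simps power2_eq_square)
  moreover have e1: "1 < e" unfolding e_def by (rule fund_unit_quad_unit_gt_1(2)[OF irr])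
  ultimately have "e' = 1 / e" by (simp add: field_simps)
  hence e': "0 < e'" "e' < 1" using e1 by simp_all
  have "d > 0" using irr by (cases "d = 0") auto
  moreover have "2 * (real_of_int y * sqrt (real d)) = e - e'" unfolding e_def e'_def fu by simp
  ultimately have "0 < real_of_int y * sqrt (real d)" "0 < sqrt (real d)" using e' e1 by simp_all
  thus "1 \<le> y" by (simp add: zero_less_mult_iff)
  have "2 * real_of_int x = e + e'" unfolding e_def e'_def fu by simp
  hence "0 < x" using e' e1 by simp
  moreover have "x \<noteq> 1" using N \<open>1 \<le> y\<close> \<open>d > 0\<close> by auto
  ultimately show "2 \<le> x" by simp
qed

lemma pell_minus_one_unsolvable:
  fixes q d :: nat and x y :: int
  assumes q: "prime q" "q mod 4 = 3" "q dvd d"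
  shows "x^2 - int d * y^2 \<noteq> -1"
proof
  assume "x^2 - int d * y^2 = -1"
  hence "x^2 + 1 = int d * y^2" by simp
  moreover have "int q dvd int d * y^2" using q(3) by simp
  ultimately have "int q dvd x^2 + 1" by simp
  hence c1: "[x^2 = -1] (mod int q)" by (simp add: cong_iff_dvd_diff)
  define m where "m = nat \<bar>x\<bar>"
  have mx: "(int m)^2 = x^2" unfolding m_def by simp
  have "\<not> q dvd m"
  proof
    assume "q dvd m"
    hence "int q dvd int m" by simp
    hence "int q dvd x^2" unfolding mx[symmetric] by (simp add: power2_eq_square)
    hence "int q dvd 1" using \<open>int q dvd x^2 + 1\<close> by (metis add_diff_cancel_left' dvd_diff)
    thus False using q(1) by simp
  qed
  hence "[int m ^ (q - 1) = 1] (mod int q)"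
    using fermat_theorem[OF q(1)] by (metis cong_int_iff of_nat_1 of_nat_power)
  moreover define k where "k = (q - 1) div 2"
  have k: "q - 1 = 2 * k" "odd k" using q(2) unfolding k_def by presburger+
  hence "[int m ^ (q - 1) = -1] (mod int q)"
    using cong_pow[OF c1, of k] unfolding k(1) power_mult mx by simp
  ultimately have "[1 = -1] (mod int q)" by (metis cong_sym cong_trans)
  hence "int q dvd 2" by (simp add: cong_iff_dvd_diff)
  hence "q \<le> 2" by (metis dvd_imp_le of_nat_dvd_iff of_nat_numeral zero_less_numeral)
  thus False using q(2) by simp
qed

section \<open>The triquadratic field\<close>

lemma triquad_fieldI:
  assumes "a0 \<in> \<rat>" "a1 \<in> \<rat>" "a2 \<in> \<rat>" "a3 \<in> \<rat>" "a4 \<in> \<rat>" "a5 \<in> \<rat>" "a6 \<in> \<rat>" "a7 \<in> \<rat>"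
  shows "a0 + a1 * sqrt 2 + a2 * sqrt (real p) + a3 * sqrt (real q)
      + a4 * sqrt (2 * real p) + a5 * sqrt (2 * real q) + a6 * sqrt (real p * real q)
      + a7 * sqrt (2 * real p * real q) \<in> triquad_field p q"
  unfolding triquad_field_def using assms by blast

lemma triquad_fieldE:
  assumes "x \<in> triquad_field p q"
  obtains a0 a1 a2 a3 a4 a5 a6 a7
  where "a0 \<in> \<rat>" "a1 \<in> \<rat>" "a2 \<in> \<rat>" "a3 \<in> \<rat>" "a4 \<in> \<rat>" "a5 \<in> \<rat>" "a6 \<in> \<rat>" "a7 \<in> \<rat>"
    "x = a0 + a1 * sqrt 2 + a2 * sqrt (real p) + a3 * sqrt (real q)
      + a4 * sqrt (2 * real p) + a5 * sqrt (2 * real q) + a6 * sqrt (real p * real q)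
      + a7 * sqrt (2 * real p * real q)"
  using assms unfolding triquad_field_def mem_Collect_eq
  by (elim exE conjE) (rule that; assumption)

lemma triquad_field_add:
  assumes "x \<in> triquad_field p q" "y \<in> triquad_field p q"
  shows "x + y \<in> triquad_field p q"
proof -
  obtain a0 a1 a2 a3 a4 a5 a6 a7 where a: "a0 \<in> \<rat>" "a1 \<in> \<rat>" "a2 \<in> \<rat>" "a3 \<in> \<rat>"
    "a4 \<in> \<rat>" "a5 \<in> \<rat>" "a6 \<in> \<rat>" "a7 \<in> \<rat>"
    "x = a0 + a1 * sqrt 2 + a2 * sqrt (real p) + a3 * sqrt (real q)
      + a4 * sqrt (2 * real p) + a5 * sqrt (2 * real q) + a6 * sqrt (real p * real q)
      + a7 * sqrt (2 * real p * real q)" using assms(1) by (rule triquad_fieldE)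
  obtain b0 b1 b2 b3 b4 b5 b6 b7 where b: "b0 \<in> \<rat>" "b1 \<in> \<rat>" "b2 \<in> \<rat>" "b3 \<in> \<rat>"
    "b4 \<in> \<rat>" "b5 \<in> \<rat>" "b6 \<in> \<rat>" "b7 \<in> \<rat>"
    "y = b0 + b1 * sqrt 2 + b2 * sqrt (real p) + b3 * sqrt (real q)
      + b4 * sqrt (2 * real p) + b5 * sqrt (2 * real q) + b6 * sqrt (real p * real q)
      + b7 * sqrt (2 * real p * real q)" using assms(2) by (rule triquad_fieldE)
  have "x + y = (a0 + b0) + (a1 + b1) * sqrt 2 + (a2 + b2) * sqrt (real p) + (a3 + b3) * sqrt (real q)
      + (a4 + b4) * sqrt (2 * real p) + (a5 + b5) * sqrt (2 * real q)
      + (a6 + b6) * sqrt (real p * real q) + (a7 + b7) * sqrt (2 * real p * real q)"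
    unfolding a(9) b(9) by (simp add: algebra_simps)
  also have "\<dots> \<in> triquad_field p q" using a b by (intro triquad_fieldI) auto
  finally show ?thesis .
qed

lemma triquad_field_Rats_mult:
  assumes "r \<in> \<rat>" "x \<in> triquad_field p q"
  shows "r * x \<in> triquad_field p q"
proof -
  obtain a0 a1 a2 a3 a4 a5 a6 a7 where a: "a0 \<in> \<rat>" "a1 \<in> \<rat>" "a2 \<in> \<rat>" "a3 \<in> \<rat>"
    "a4 \<in> \<rat>" "a5 \<in> \<rat>" "a6 \<in> \<rat>" "a7 \<in> \<rat>"
    "x = a0 + a1 * sqrt 2 + a2 * sqrt (real p) + a3 * sqrt (real q)
      + a4 * sqrt (2 * real p) + a5 * sqrt (2 * real q) + a6 * sqrt (real p * real q)
      + a7 * sqrt (2 * real p * real q)" using assms(2) by (rule triquad_fieldE)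
  have "r * x = (r * a0) + (r * a1) * sqrt 2 + (r * a2) * sqrt (real p) + (r * a3) * sqrt (real q)
      + (r * a4) * sqrt (2 * real p) + (r * a5) * sqrt (2 * real q)
      + (r * a6) * sqrt (real p * real q) + (r * a7) * sqrt (2 * real p * real q)"
    unfolding a(9) by (simp add: algebra_simps)
  also have "\<dots> \<in> triquad_field p q" using a assms(1) by (intro triquad_fieldI) auto
  finally show ?thesis .
qed

lemma Rats_subset_triquad_field: "\<rat> \<subseteq> triquad_field p q"
proof
  fix r :: real assume "r \<in> \<rat>"
  thus "r \<in> triquad_field p q" using triquad_fieldI[of r 0 0 0 0 0 0 0 p q] by simp
qed

lemma triquad_field_uminus: "x \<in> triquad_field p q \<Longrightarrow> - x \<in> triquad_field p q"
  using triquad_field_Rats_mult[of "-1" x] by simp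

lemma triquad_field_monomials:
  "sqrt 2 \<in> triquad_field p q" "sqrt (real p) \<in> triquad_field p q" "sqrt (real q) \<in> triquad_field p q"
  "sqrt 2 * sqrt (real p) \<in> triquad_field p q" "sqrt 2 * sqrt (real q) \<in> triquad_field p q"
  "sqrt (real p) * sqrt (real q) \<in> triquad_field p q"
  "sqrt 2 * sqrt (real p) * sqrt (real q) \<in> triquad_field p q"
  using triquad_fieldI[of 0 1 0 0 0 0 0 0] triquad_fieldI[of 0 0 1 0 0 0 0 0]
    triquad_fieldI[of 0 0 0 1 0 0 0 0] triquad_fieldI[of 0 0 0 0 1 0 0 0]
    triquad_fieldI[of 0 0 0 0 0 1 0 0] triquad_fieldI[of 0 0 0 0 0 0 1 0]
    triquad_fieldI[of 0 0 0 0 0 0 0 1]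
  by (simp_all add: real_sqrt_mult)

lemma sqrt_divisor_in_triquad_field:
  fixes p q g :: nat
  assumes "prime p" "prime q" "g dvd 2 * p * q"
  shows "sqrt (real g) \<in> triquad_field p q"
proof -
  obtain g1 c where gc: "g = g1 * c" "g1 dvd 2 * p" "c dvd q" using division_decomp[OF assms(3)] by blast
  obtain a b where ab: "g1 = a * b" "a dvd 2" "b dvd p" using division_decomp[OF gc(2)] by blast
  have "a = 1 \<or> a = 2" "b = 1 \<or> b = p" "c = 1 \<or> c = q"
    using ab gc assms(1,2) two_is_prime_nat by (simp_all add: prime_nat_iff)
  moreover have "sqrt (real g) = sqrt (real a) * sqrt (real b) * sqrt (real c)"
    unfolding gc(1) ab(1) by (simp add: real_sqrt_mult)
  ultimately show ?thesis
    using triquad_field_monomials Rats_subset_triquad_field[of p q] by auto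
qed

lemma coprime_factor_eq_dvd_times_square:
  fixes A B m c :: nat
  assumes cop: "coprime A B" and eq: "A * B = m * c^2"
  shows "\<exists>g a. g dvd m \<and> A = g * a^2"
proof (cases "A = 0 \<or> B = 0 \<or> m = 0")
  case True
  hence "A = 0 \<or> A = 1" using cop eq by auto
  thus ?thesis
  proof
    assume "A = 0" thus ?thesis by (intro exI[of _ m] exI[of _ 0]) simp
  next
    assume "A = 1" thus ?thesis by (intro exI[of _ 1]) simp
  qed
next
  case False
  hence nz: "A > 0" "B > 0" "m > 0" by auto
  define g where "g = gcd A m"
  have gpos: "g > 0" unfolding g_def using nz by simp
  define A1 where "A1 = A div g"
  define m1 where "m1 = m div g"
  have A: "A = g * A1" unfolding A1_def g_def by simp
  have m: "m = g * m1" unfolding m1_def g_def by simp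
  have cop1: "coprime A1 m1" unfolding A1_def m1_def g_def using nz by (intro div_gcd_coprime) auto
  have "g * (A1 * B) = g * (m1 * c^2)" using eq A m by (simp add: ac_simps)
  hence e1: "A1 * B = m1 * c^2" using gpos by simp
  have "A1 * (B * m1) = (m1 * c)^2" using e1 by (simp add: power2_eq_square ac_simps)
  moreover have "coprime A1 (B * m1)"
  proof -
    have "coprime A1 B" using cop A by (metis coprime_mult_left_iff)
    thus ?thesis using cop1 by simp
  qed
  moreover have "A1 > 0" using A nz by (metis mult_0_right not_gr0)
  moreover have "B * m1 > 0" using nz m by (metis mult_0_right mult_pos_pos not_gr0)
  ultimately have "is_nth_power 2 A1" using is_nth_power_mult_coprime_natD(1)[of A1 "B*m1" 2]
    by (metis is_nth_powerI)
  then obtain a where "A1 = a^2" by (auto elim: is_nth_powerE)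
  thus ?thesis using A m by (intro exI[of _ g] exI[of _ a]) simp
qed

lemma sqrt_coprime_factor_in_triquad_field:
  fixes p q A B m c h :: nat
  assumes "prime p" "prime q" "coprime A B" "A * B = m * c^2" "h * m dvd 2 * p * q"
  shows "sqrt (real (h * A)) \<in> triquad_field p q"
proof -
  obtain g a where ga: "g dvd m" "A = g * a^2" using coprime_factor_eq_dvd_times_square assms(3,4) by blast
  have "sqrt (real (h * A)) = real a * sqrt (real (h * g))" unfolding ga(2) by (simp add: real_sqrt_mult)
  moreover have "h * g dvd 2 * p * q" using ga(1) assms(5) by (meson dvd_trans mult_dvd_mono dvd_refl)
  ultimately show ?thesis
    using sqrt_divisor_in_triquad_field[OF assms(1,2)] triquad_field_Rats_mult[of "real a"]
    by (simp del: of_nat_mult)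
qed

lemma sqrt_sum_square:
  assumes "0 \<le> A" "0 \<le> B"
  shows "(sqrt A + sqrt B)^2 = A + B + 2 * sqrt (A * B)"
  using assms by (simp add: power2_sum real_sqrt_mult)

lemma pell_even_y_if_odd_x:
  fixes p q D :: nat and x y :: int
  assumes odd: "odd (p * q)" and D: "D dvd 2 * p * q"
    and pell: "x^2 - int D * y^2 = 1" and x: "odd x"
  shows "even y"
proof -
  obtain k where k: "x = 2 * k + 1" using x by (metis oddE)
  obtain j where "k * (k + 1) = 2 * j" by (metis evenE even_mult_iff even_add odd_one)
  moreover have "4 * (k * (k + 1)) = int D * y^2"
    using pell unfolding k by (simp add: algebra_simps power2_eq_square)
  ultimately have "int D * y^2 = 8 * j" by simp
  hence "8 dvd int D * y^2" by simp
  show ?thesis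
  proof (rule ccontr)
    assume "odd y"
    hence "coprime (2 ^ 3) (y^2)"
      by (simp only: coprime_power_left_iff coprime_power_right_iff coprime_left_2_iff_odd) simp
    hence "coprime 8 (y^2)" by simp
    hence "8 dvd int D" using \<open>8 dvd int D * y^2\<close> coprime_dvd_mult_left_iff by blast
    moreover have "int D dvd int (2 * p * q)" using D by (simp only: of_nat_dvd_iff)
    hence "int D dvd 2 * int (p * q)" by (simp add: mult.assoc)
    ultimately have "2 * 4 dvd 2 * int (p * q)" using dvd_trans by fastforce
    hence "2 dvd int (p * q)" by (metis dvd_mult_cancel_left dvd_trans dvd_triv_left zero_neq_numeral mult_2 numeral_Bit0)
    thus False using odd by simp
  qed
qed

lemma pell_unit_square_in_triquad_field_odd_x:
  fixes p q D :: nat and x y :: int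
  assumes p: "prime p" and q: "prime q" and odd: "odd (p * q)" and D: "D dvd 2 * p * q"
    and pell: "x^2 - int D * y^2 = 1" and x: "2 \<le> x" "odd x" and y: "1 \<le> y"
  shows "\<exists>\<eta>\<in>triquad_field p q. \<eta>^2 = of_int x + of_int y * sqrt (real D)"
proof -
  obtain k where k: "x = 2 * k + 1" using x(2) by (metis oddE)
  obtain z where z: "y = 2 * z" using pell_even_y_if_odd_x[OF odd D pell x(2)] by (metis evenE)
  have kz: "(k + 1) * k = int D * z^2"
    using pell unfolding k z by (simp add: algebra_simps power2_eq_square)
  have nonneg: "0 \<le> k" "0 \<le> z" using x y k z by simp_all
  define A B where "A = nat (k + 1)" and "B = nat k"
  have AB: "int A = k + 1" "int B = k" using nonneg unfolding A_def B_def by simp_all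
  have "coprime A B" unfolding A_def B_def using nonneg by (simp add: nat_add_distrib)
  moreover have "int (A * B) = int (D * nat z ^ 2)" using kz nonneg AB by simp
  hence ABD: "A * B = D * nat z ^ 2" by (simp only: of_nat_eq_iff)
  moreover have "1 * D dvd 2 * p * q" using D by simp
  ultimately have "sqrt (real A) \<in> triquad_field p q" "sqrt (real B) \<in> triquad_field p q"
    using sqrt_coprime_factor_in_triquad_field[OF p q, of A B D "nat z" 1]
      sqrt_coprime_factor_in_triquad_field[OF p q, of B A D "nat z" 1]
    by (simp_all add: coprime_commute mult.commute)
  moreover have "(sqrt (real A) + sqrt (real B))^2 = of_int x + of_int y * sqrt (real D)"
  proof -
    have "real A * real B = real D * (of_int z)^2"
      using arg_cong[OF ABD, of real] nonneg by simp
    hence "sqrt (real A * real B) = of_int z * sqrt (real D)"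
      using nonneg by (simp add: real_sqrt_mult)
    moreover have "real A + real B = of_int (int A + int B)" by simp
    hence "real A + real B = of_int x" using AB k by simp
    ultimately show ?thesis unfolding sqrt_sum_square[OF of_nat_0_le_iff of_nat_0_le_iff] z by simp
  qed
  ultimately show ?thesis using triquad_field_add by blast
qed

lemma pell_unit_square_in_triquad_field_even_x:
  fixes p q D :: nat and x y :: int
  assumes p: "prime p" and q: "prime q" and D: "D dvd 2 * p * q"
    and pell: "x^2 - int D * y^2 = 1" and x: "2 \<le> x" "even x" and y: "1 \<le> y"
  shows "\<exists>\<eta>\<in>triquad_field p q. \<eta>^2 = of_int x + of_int y * sqrt (real D)"
proof -
  have "int D * y^2 = x^2 - 1" using pell by simp
  hence "odd (int D * y^2)" using x(2) by simp
  hence "odd D" by simp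
  moreover have "D dvd 2 * (p * q)" using D by (simp add: mult.assoc)
  ultimately have "D dvd p * q" using coprime_dvd_mult_right_iff[of D 2] by (simp add: coprime_commute)
  hence "2 * D dvd 2 * (p * q)" by simp
  define A B where "A = nat (x + 1)" and "B = nat (x - 1)"
  have AB: "int A = x + 1" "int B = x - 1" using x(1) unfolding A_def B_def by simp_all
  have "int (A * B) = (x + 1) * (x - 1)" using AB by simp
  also have "\<dots> = int D * y^2" using pell by (simp add: algebra_simps power2_eq_square)
  also have "\<dots> = int (D * nat y ^ 2)" using y by simp
  finally have ABD: "A * B = D * nat y ^ 2" by (simp only: of_nat_eq_iff)
  have "coprime 2 (x - 1)" using x(2) by simp
  hence "gcd (2 + (x - 1)) (x - 1) = 1" by (simp only: gcd_add1 coprime_iff_gcd_eq_1)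
  hence "coprime (int A) (int B)" unfolding AB by (simp add: coprime_iff_gcd_eq_1 add.commute)
  hence "coprime A B" by simp
  moreover note ABD
  moreover have "2 * D dvd 2 * p * q" using \<open>2 * D dvd 2 * (p * q)\<close> by (simp add: mult.assoc)
  ultimately have "sqrt (real (2 * A)) \<in> triquad_field p q" "sqrt (real (2 * B)) \<in> triquad_field p q"
    using sqrt_coprime_factor_in_triquad_field[OF p q, of A B D "nat y" 2]
      sqrt_coprime_factor_in_triquad_field[OF p q, of B A D "nat y" 2]
    by (simp_all add: coprime_commute mult.commute)
  hence "1 / 2 * (sqrt (real (2 * A)) + sqrt (real (2 * B))) \<in> triquad_field p q"
    by (intro triquad_field_Rats_mult triquad_field_add) simp_all
  moreover have "(1 / 2 * (sqrt (real (2 * A)) + sqrt (real (2 * B))))^2 = of_int x + of_int y * sqrt (real D)"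
  proof -
    have "real (2 * A) * real (2 * B) = (2 * of_int y)^2 * real D"
      using arg_cong[OF ABD, of real] y by (simp add: power2_eq_square)
    hence "sqrt (real (2 * A) * real (2 * B)) = 2 * of_int y * sqrt (real D)"
      using y by (simp add: real_sqrt_mult)
    moreover have "real (2 * A) + real (2 * B) = 4 * of_int x"
      using arg_cong[OF AB(1), of real_of_int] arg_cong[OF AB(2), of real_of_int] by simp
    ultimately have "(sqrt (real (2 * A)) + sqrt (real (2 * B)))^2 = 4 * (of_int x + of_int y * sqrt (real D))"
      unfolding sqrt_sum_square[OF of_nat_0_le_iff of_nat_0_le_iff] by simp
    thus ?thesis by (simp add: power_mult_distrib power_divide)
  qed
  ultimately show ?thesis by blast
qed

text \<open>The square root is \<open>sqrt ((x + 1)/2) + sqrt ((x - 1)/2)\<close>; the parity of \<open>x\<close> decides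
  whether \<open>x \<plusminus> 1\<close> are both even or both odd.\<close>
lemma pell_unit_square_in_triquad_field:
  fixes p q D :: nat and x y :: int
  assumes "prime p" "prime q" "odd (p * q)" "D dvd 2 * p * q"
    and "x^2 - int D * y^2 = 1" "2 \<le> x" "1 \<le> y"
  shows "\<exists>\<eta>\<in>triquad_field p q. \<eta>^2 = of_int x + of_int y * sqrt (real D)"
  using pell_unit_square_in_triquad_field_odd_x[OF assms(1-6) _ assms(7)]
    pell_unit_square_in_triquad_field_even_x[OF assms(1,2,4-6) _ assms(7)] by blast

lemma field_aut_add: "field_aut K \<sigma> \<Longrightarrow> a \<in> K \<Longrightarrow> b \<in> K \<Longrightarrow> \<sigma> (a + b) = \<sigma> a + \<sigma> b"
  unfolding field_aut_def by blast

lemma field_aut_mult: "field_aut K \<sigma> \<Longrightarrow> a \<in> K \<Longrightarrow> b \<in> K \<Longrightarrow> \<sigma> (a * b) = \<sigma> a * \<sigma> b"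
  unfolding field_aut_def by blast

lemma field_aut_comp:
  assumes "field_aut K \<sigma>" "field_aut K \<tau>"
  shows "field_aut K (\<sigma> \<circ> \<tau>)"
proof -
  have "\<tau> a \<in> K" if "a \<in> K" for a using assms(2) that unfolding field_aut_def bij_betw_def by blast
  thus ?thesis using assms unfolding field_aut_def by (auto intro: bij_betw_trans)
qed

lemma field_aut_uminus:
  assumes "field_aut K \<sigma>" "0 \<in> K" "a \<in> K" "- a \<in> K"
  shows "\<sigma> (- a) = - \<sigma> a"
proof -
  have "\<sigma> 0 = 0" using field_aut_add[OF assms(1,2,2)] by simp
  thus ?thesis using field_aut_add[OF assms(1,3,4)] by simp
qed

lemma field_aut_fixes_Rats:
  assumes aut: "field_aut K \<sigma>" and K: "\<rat> \<subseteq> K" and r: "r \<in> \<rat>"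
  shows "\<sigma> r = r"
proof -
  have nat: "\<sigma> (real n) = real n" for n
  proof (induction n)
    case 0
    show ?case using field_aut_add[OF aut, of 0 0] K by auto
  next
    case (Suc n)
    have "\<sigma> (real n + 1) = \<sigma> (real n) + \<sigma> 1" using K by (intro field_aut_add[OF aut]) auto
    thus ?case using Suc aut unfolding field_aut_def by (simp add: add.commute)
  qed
  have int: "\<sigma> (of_int i) = of_int i" for i
  proof (cases "i \<ge> 0")
    case True thus ?thesis using nat[of "nat i"] by simp
  next
    case False
    hence "\<sigma> (of_int i) = \<sigma> (- real (nat (- i)))" by simp
    also have "\<dots> = - real (nat (- i))" using K nat by (subst field_aut_uminus[OF aut]) auto
    finally show ?thesis using False by simp
  qed
  obtain i j where ij: "j > 0" "r = of_int i / of_int j" using r by (rule Rats_cases') auto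
  have jr: "of_int j * r = of_int i" using ij by simp
  have "\<sigma> (of_int j * r) = \<sigma> (of_int j) * \<sigma> r" using K r by (intro field_aut_mult[OF aut]) auto
  hence "of_int j * \<sigma> r = of_int j * r" unfolding jr int by simp
  thus ?thesis using ij(1) by simp
qed

lemma field_aut_Rats_mult:
  assumes "field_aut K \<sigma>" "\<rat> \<subseteq> K" "c \<in> \<rat>" "a \<in> K"
  shows "\<sigma> (c * a) = c * \<sigma> a"
  using field_aut_mult[OF assms(1) _ assms(4), of c] field_aut_fixes_Rats[OF assms(1-3)] assms(2,3)
  by auto

lemma triquad_field_aut_monomials:
  assumes aut: "field_aut (triquad_field p q) \<sigma>" and c: "c \<in> \<rat>"
    and s: "\<sigma> (sqrt 2) = s * sqrt 2" and t: "\<sigma> (sqrt (real p)) = t * sqrt (real p)"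
    and u: "\<sigma> (sqrt (real q)) = u * sqrt (real q)"
  shows "\<sigma> (c * sqrt 2) = s * (c * sqrt 2)"
    and "\<sigma> (c * sqrt (real p)) = t * (c * sqrt (real p))"
    and "\<sigma> (c * sqrt (real q)) = u * (c * sqrt (real q))"
    and "\<sigma> (c * (sqrt 2 * sqrt (real p))) = (s * t) * (c * (sqrt 2 * sqrt (real p)))"
    and "\<sigma> (c * (sqrt 2 * sqrt (real q))) = (s * u) * (c * (sqrt 2 * sqrt (real q)))"
    and "\<sigma> (c * (sqrt (real p) * sqrt (real q))) = (t * u) * (c * (sqrt (real p) * sqrt (real q)))"
    and "\<sigma> (c * (sqrt 2 * sqrt (real p) * sqrt (real q)))
           = (s * t * u) * (c * (sqrt 2 * sqrt (real p) * sqrt (real q)))"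
proof -
  note M = triquad_field_monomials[where p = p and q = q]
  note sc = field_aut_Rats_mult[OF aut Rats_subset_triquad_field c]
  note m = field_aut_mult[OF aut]
  show "\<sigma> (c * sqrt 2) = s * (c * sqrt 2)" using sc[OF M(1)] s by simp
  show "\<sigma> (c * sqrt (real p)) = t * (c * sqrt (real p))" using sc[OF M(2)] t by simp
  show "\<sigma> (c * sqrt (real q)) = u * (c * sqrt (real q))" using sc[OF M(3)] u by simp
  show "\<sigma> (c * (sqrt 2 * sqrt (real p))) = (s * t) * (c * (sqrt 2 * sqrt (real p)))"
    using sc[OF M(4)] m[OF M(1,2)] s t by simp
  show "\<sigma> (c * (sqrt 2 * sqrt (real q))) = (s * u) * (c * (sqrt 2 * sqrt (real q)))"
    using sc[OF M(5)] m[OF M(1,3)] s u by simp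
  show "\<sigma> (c * (sqrt (real p) * sqrt (real q))) = (t * u) * (c * (sqrt (real p) * sqrt (real q)))"
    using sc[OF M(6)] m[OF M(2,3)] t u by simp
  show "\<sigma> (c * (sqrt 2 * sqrt (real p) * sqrt (real q)))
           = (s * t * u) * (c * (sqrt 2 * sqrt (real p) * sqrt (real q)))"
    using sc[OF M(7)] m[OF M(4,3)] m[OF M(1,2)] s t u by simp
qed

section \<open>Galois action on square roots of units\<close>

lemma pell_unit_as_square:
  fixes x y :: int and D :: nat and U W :: real
  assumes pell: "x^2 - int D * y^2 = 1" and x: "1 < x"
    and UW: "2 * U * W = of_int y * sqrt (real D)"
    and half: "U^2 = (of_int x + 1) / 2 \<or> W^2 = (of_int x - 1) / 2"
  shows "U^2 - W^2 = 1" "(U + W)^2 = of_int x + of_int y * sqrt (real D)"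
proof -
  have prod: "(2 * U^2) * (2 * W^2) = (of_int x + 1) * (of_int x - 1)"
  proof -
    have "(2 * U^2) * (2 * W^2) = (of_int y * sqrt (real D))^2" unfolding UW[symmetric] by (simp add: power2_eq_square)
    also have "\<dots> = of_int (int D * y^2)" by (simp add: power_mult_distrib)
    also have "int D * y^2 = (x - 1) * (x + 1)" using pell by (simp add: power2_eq_square algebra_simps)
    finally show ?thesis by simp
  qed
  have nz: "of_int x + 1 \<noteq> (0::real)" "of_int x - 1 \<noteq> (0::real)" using x by simp_all
  have "2 * U^2 = of_int x + 1 \<and> 2 * W^2 = of_int x - 1"
  proof (cases "U^2 = (of_int x + 1) / 2")
    case True
    hence hU: "2 * U^2 = of_int x + 1" by simp
    have "(of_int x + 1) * (2 * W^2) = (of_int x + 1) * (of_int x - 1)" using prod unfolding hU .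
    thus ?thesis using hU nz(1) by simp
  next
    case False
    hence hW: "2 * W^2 = of_int x - 1" using half by simp
    have "(2 * U^2) * (of_int x - 1) = (of_int x + 1) * (of_int x - 1)" using prod unfolding hW .
    thus ?thesis using hW nz(2) by simp
  qed
  hence halves: "U^2 = (of_int x + 1) / 2" "W^2 = (of_int x - 1) / 2" by simp_all
  thus "U^2 - W^2 = 1" by simp
  show "(U + W)^2 = of_int x + of_int y * sqrt (real D)"
    unfolding power2_sum halves mult.assoc[symmetric] UW by (simp add: field_simps)
qed

text \<open>\<open>rel_norm_value e a b\<close> is \<open>\<eta> \<sigma>(\<eta>)\<close> for \<open>\<eta> = \<plusminus>(U + W)\<close>, where \<open>e = (U + W)^2\<close>,
  \<open>U^2 - W^2 = 1\<close>, \<open>\<sigma> U = a U\<close> and \<open>\<sigma> W = b W\<close>.\<close>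
definition rel_norm_value :: "real \<Rightarrow> real \<Rightarrow> real \<Rightarrow> real" where
  "rel_norm_value e a b = (if a = b then a * e else a)"

lemma triquad_field_aut_square_root_product:
  assumes aut: "field_aut (triquad_field p q) \<sigma>"
    and K: "U \<in> triquad_field p q" "W \<in> triquad_field p q"
    and \<sigma>: "\<sigma> U = a * U" "\<sigma> W = b * W" and ab: "a \<in> {1, -1}" "b \<in> {1, -1}"
    and UW: "U^2 - W^2 = 1" and \<eta>: "\<eta>^2 = (U + W)^2"
  shows "\<eta> * \<sigma> \<eta> = rel_norm_value ((U + W)^2) a b"
proof -
  have UWK: "U + W \<in> triquad_field p q" using K by (rule triquad_field_add)
  have "\<sigma> (U + W) = a * U + b * W" using field_aut_add[OF aut K] \<sigma> by simp
  moreover have "\<eta> * \<sigma> \<eta> = (U + W) * \<sigma> (U + W)"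
  proof (cases "\<eta> = U + W")
    case False
    hence \<eta>_eq: "\<eta> = - (U + W)" using \<eta> by (simp add: power2_eq_iff)
    have "0 \<in> triquad_field p q" using Rats_subset_triquad_field[THEN subsetD, OF Rats_0] .
    hence "\<sigma> \<eta> = - \<sigma> (U + W)"
      unfolding \<eta>_eq using field_aut_uminus[OF aut _ UWK triquad_field_uminus[OF UWK]] by blast
    thus ?thesis unfolding \<eta>_eq by (simp only: minus_mult_minus)
  qed simp
  moreover have "(U + W) * (a * U + b * W) = rel_norm_value ((U + W)^2) a b"
  proof -
    have sq: "U * U - W * W = 1" using UW by (simp add: power2_eq_square)
    from ab consider "a = 1" "b = 1" | "a = 1" "b = -1" | "a = -1" "b = 1" | "a = -1" "b = -1"
      by auto
    thus ?thesis
      by cases (use sq in \<open>simp_all add: rel_norm_value_def power2_eq_square algebra_simps\<close>)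
  qed
  ultimately show ?thesis by simp
qed

lemma is_nat_square_posE:
  assumes "is_nat_square z" "0 < z"
  obtains n :: nat where "of_int z = real n ^ 2" "0 < n"
proof -
  obtain n :: nat where "z = int n ^ 2" using assms(1) unfolding is_nat_square_def by blast
  thus ?thesis using that assms(2) by (cases "n = 0") auto
qed

locale triquad_galois =
  fixes p q :: nat and \<tau>1 \<tau>2 \<tau>3 :: "real \<Rightarrow> real"
  assumes p_pos: "0 < p"
    and aut1: "field_aut (triquad_field p q) \<tau>1"
    and gens1: "\<tau>1 (sqrt 2) = - sqrt 2" "\<tau>1 (sqrt (real p)) = sqrt (real p)" "\<tau>1 (sqrt (real q)) = sqrt (real q)"
    and aut2: "field_aut (triquad_field p q) \<tau>2"
    and gens2: "\<tau>2 (sqrt 2) = sqrt 2" "\<tau>2 (sqrt (real p)) = - sqrt (real p)" "\<tau>2 (sqrt (real q)) = sqrt (real q)"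
    and aut3: "field_aut (triquad_field p q) \<tau>3"
    and gens3: "\<tau>3 (sqrt 2) = sqrt 2" "\<tau>3 (sqrt (real p)) = sqrt (real p)" "\<tau>3 (sqrt (real q)) = - sqrt (real q)"
begin

lemma generator_signs:
  "\<tau>1 (sqrt 2) = (-1) * sqrt 2" "\<tau>1 (sqrt (real p)) = 1 * sqrt (real p)" "\<tau>1 (sqrt (real q)) = 1 * sqrt (real q)"
  "\<tau>2 (sqrt 2) = 1 * sqrt 2" "\<tau>2 (sqrt (real p)) = (-1) * sqrt (real p)" "\<tau>2 (sqrt (real q)) = 1 * sqrt (real q)"
  "\<tau>3 (sqrt 2) = 1 * sqrt 2" "\<tau>3 (sqrt (real p)) = 1 * sqrt (real p)" "\<tau>3 (sqrt (real q)) = (-1) * sqrt (real q)"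
  using gens1 gens2 gens3 by simp_all

lemmas \<tau>1_monomials = triquad_field_aut_monomials[OF aut1 _ generator_signs(1-3)]
lemmas \<tau>2_monomials = triquad_field_aut_monomials[OF aut2 _ generator_signs(4-6)]
lemmas \<tau>3_monomials = triquad_field_aut_monomials[OF aut3 _ generator_signs(7-9)]

lemma rel_norm_tuple:
  assumes K: "U \<in> triquad_field p q" "W \<in> triquad_field p q"
    and \<tau>1: "\<tau>1 U = u1 * U" "\<tau>1 W = w1 * W" and \<tau>2: "\<tau>2 U = u2 * U" "\<tau>2 W = w2 * W"
    and \<tau>3: "\<tau>3 U = u3 * U" "\<tau>3 W = w3 * W"
    and signs: "u1 \<in> {1, -1}" "u2 \<in> {1, -1}" "u3 \<in> {1, -1}" "w1 \<in> {1, -1}" "w2 \<in> {1, -1}" "w3 \<in> {1, -1}"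
    and UW: "U^2 - W^2 = 1" and \<eta>: "\<eta>^2 = (U + W)^2"
  shows "(\<eta> * \<tau>2 \<eta>, \<eta> * \<tau>1 (\<tau>2 \<eta>), \<eta> * \<tau>1 (\<tau>3 \<eta>), \<eta> * \<tau>2 (\<tau>3 \<eta>), \<eta> * \<tau>1 \<eta>)
    = (rel_norm_value ((U + W)^2) u2 w2, rel_norm_value ((U + W)^2) (u1 * u2) (w1 * w2),
       rel_norm_value ((U + W)^2) (u1 * u3) (w1 * w3), rel_norm_value ((U + W)^2) (u2 * u3) (w2 * w3),
       rel_norm_value ((U + W)^2) u1 w1)"
proof -
  have comp: "(\<sigma> \<circ> \<tau>) U = (s * t) * U" "(\<sigma> \<circ> \<tau>) W = (s' * t') * W"
    if aut: "field_aut (triquad_field p q) \<sigma>" and \<sigma>: "\<sigma> U = s * U" "\<sigma> W = s' * W"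
      and \<tau>: "\<tau> U = t * U" "\<tau> W = t' * W" and t: "t \<in> {1, -1}" "t' \<in> {1, -1}" for \<sigma> \<tau> s s' t t'
  proof -
    have "t \<in> \<rat>" "t' \<in> \<rat>" using t by auto
    thus "(\<sigma> \<circ> \<tau>) U = (s * t) * U" "(\<sigma> \<circ> \<tau>) W = (s' * t') * W"
      using field_aut_Rats_mult[OF aut Rats_subset_triquad_field _ K(1), of t]
        field_aut_Rats_mult[OF aut Rats_subset_triquad_field _ K(2), of t'] \<sigma> \<tau> by simp_all
  qed
  have sign_mult: "a * b \<in> {1, -1}" if "a \<in> {1, -1}" "b \<in> {1, -1}" for a b :: real
    using that by auto
  note prod = triquad_field_aut_square_root_product[OF _ K _ _ _ _ UW \<eta>]
  note comp_aut = field_aut_comp[OF aut1 aut2] field_aut_comp[OF aut1 aut3] field_aut_comp[OF aut2 aut3]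
  show ?thesis
    using prod[OF aut2 \<tau>2 signs(2,5)] prod[OF aut1 \<tau>1 signs(1,4)]
      prod[OF comp_aut(1) comp[OF aut1 \<tau>1 \<tau>2 signs(2,5)] sign_mult[OF signs(1,2)] sign_mult[OF signs(4,5)]]
      prod[OF comp_aut(2) comp[OF aut1 \<tau>1 \<tau>3 signs(3,6)] sign_mult[OF signs(1,3)] sign_mult[OF signs(4,6)]]
      prod[OF comp_aut(3) comp[OF aut2 \<tau>2 \<tau>3 signs(3,6)] sign_mult[OF signs(2,3)] sign_mult[OF signs(5,6)]]
    by (simp only: o_apply)
qed

lemma rel_norm_tuple_2pq_sq_x_minus_1:
  fixes x y :: int and e \<eta> :: real
  assumes pell: "x^2 - int (2 * p * q) * y^2 = 1" "2 \<le> x"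
    and e: "e = of_int x + of_int y * sqrt (real (2 * p * q))" and \<eta>: "\<eta>^2 = e"
    and sq: "is_nat_square (x - 1)"
  shows "(\<eta> * \<tau>2 \<eta>, \<eta> * \<tau>1 (\<tau>2 \<eta>), \<eta> * \<tau>1 (\<tau>3 \<eta>), \<eta> * \<tau>2 (\<tau>3 \<eta>), \<eta> * \<tau>1 \<eta>)
    = (-1, -e, -e, e, 1)"
proof -
  obtain n :: nat where n: "of_int x - 1 = real n ^ 2" "0 < n"
    using sq pell(2) by (elim is_nat_square_posE) auto
  define U W where "U = of_int y / real n * (sqrt (real p) * sqrt (real q))"
    and "W = real n / 2 * sqrt 2"
  have c: "of_int y / real n \<in> \<rat>" "real n / 2 \<in> \<rat>" by simp_all
  have "2 * U * W = of_int y * sqrt (real (2 * p * q))"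
    using n(2) by (simp add: U_def W_def real_sqrt_mult field_simps)
  moreover have "W^2 = (of_int x - 1) / 2" using n(1) by (simp add: U_def W_def power_mult_distrib power_divide field_simps)
  ultimately have UW: "U^2 - W^2 = 1" "(U + W)^2 = e"
    using pell_unit_as_square[OF pell(1)] pell(2) unfolding e by simp_all
  have K: "U \<in> triquad_field p q" "W \<in> triquad_field p q"
    unfolding U_def W_def
    by (rule triquad_field_Rats_mult[OF c(1) triquad_field_monomials(6)],
        rule triquad_field_Rats_mult[OF c(2) triquad_field_monomials(1)])
  show ?thesis
    using rel_norm_tuple[OF K \<tau>1_monomials(6)[OF c(1), folded U_def] \<tau>1_monomials(1)[OF c(2), folded W_def]
        \<tau>2_monomials(6)[OF c(1), folded U_def] \<tau>2_monomials(1)[OF c(2), folded W_def]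
        \<tau>3_monomials(6)[OF c(1), folded U_def] \<tau>3_monomials(1)[OF c(2), folded W_def] _ _ _ _ _ _ UW(1)]
      \<eta> UW(2) by (simp add: rel_norm_value_def)
qed

lemma rel_norm_tuple_2pq_sq_p_x_minus_1:
  fixes x y :: int and e \<eta> :: real
  assumes pell: "x^2 - int (2 * p * q) * y^2 = 1" "2 \<le> x"
    and e: "e = of_int x + of_int y * sqrt (real (2 * p * q))" and \<eta>: "\<eta>^2 = e"
    and sq: "is_nat_square (int p * (x - 1))"
  shows "(\<eta> * \<tau>2 \<eta>, \<eta> * \<tau>1 (\<tau>2 \<eta>), \<eta> * \<tau>1 (\<tau>3 \<eta>), \<eta> * \<tau>2 (\<tau>3 \<eta>), \<eta> * \<tau>1 \<eta>)
    = (1, e, -e, -e, 1)"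
proof -
  obtain n :: nat where n: "real p * (of_int x - 1) = real n ^ 2" "0 < n"
    using sq pell(2) p_pos by (elim is_nat_square_posE) auto
  define U W where "U = real p * of_int y / real n * sqrt (real q)"
    and "W = real n / (2 * real p) * (sqrt 2 * sqrt (real p))"
  have c: "real p * of_int y / real n \<in> \<rat>" "real n / (2 * real p) \<in> \<rat>" by simp_all
  have "2 * U * W = of_int y * sqrt (real (2 * p * q))"
    using n(2) p_pos by (simp add: U_def W_def real_sqrt_mult field_simps)
  moreover have "W^2 = (of_int x - 1) / 2"
    unfolding U_def W_def power_mult_distrib power_divide n(1)[symmetric] using p_pos
    by (simp add: power2_eq_square)
  ultimately have UW: "U^2 - W^2 = 1" "(U + W)^2 = e"
    using pell_unit_as_square[OF pell(1)] pell(2) unfolding e by simp_all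
  have K: "U \<in> triquad_field p q" "W \<in> triquad_field p q"
    unfolding U_def W_def
    by (rule triquad_field_Rats_mult[OF c(1) triquad_field_monomials(3)],
        rule triquad_field_Rats_mult[OF c(2) triquad_field_monomials(4)])
  show ?thesis
    using rel_norm_tuple[OF K \<tau>1_monomials(3)[OF c(1), folded U_def] \<tau>1_monomials(4)[OF c(2), folded W_def]
        \<tau>2_monomials(3)[OF c(1), folded U_def] \<tau>2_monomials(4)[OF c(2), folded W_def]
        \<tau>3_monomials(3)[OF c(1), folded U_def] \<tau>3_monomials(4)[OF c(2), folded W_def] _ _ _ _ _ _ UW(1)]
      \<eta> UW(2) by (simp add: rel_norm_value_def)
qed

lemma rel_norm_tuple_2pq_sq_2p_x_plus_1:
  fixes x y :: int and e \<eta> :: real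
  assumes pell: "x^2 - int (2 * p * q) * y^2 = 1" "2 \<le> x"
    and e: "e = of_int x + of_int y * sqrt (real (2 * p * q))" and \<eta>: "\<eta>^2 = e"
    and sq: "is_nat_square (2 * int p * (x + 1))"
  shows "(\<eta> * \<tau>2 \<eta>, \<eta> * \<tau>1 (\<tau>2 \<eta>), \<eta> * \<tau>1 (\<tau>3 \<eta>), \<eta> * \<tau>2 (\<tau>3 \<eta>), \<eta> * \<tau>1 \<eta>)
    = (-1, -e, e, -e, 1)"
proof -
  obtain n :: nat where n: "2 * real p * (of_int x + 1) = real n ^ 2" "0 < n"
    using sq pell(2) p_pos by (elim is_nat_square_posE) auto
  define U W where "U = real n / (2 * real p) * sqrt (real p)"
    and "W = real p * of_int y / real n * (sqrt 2 * sqrt (real q))"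
  have c: "real n / (2 * real p) \<in> \<rat>" "real p * of_int y / real n \<in> \<rat>" by simp_all
  have "2 * U * W = of_int y * sqrt (real (2 * p * q))"
    using n(2) p_pos by (simp add: U_def W_def real_sqrt_mult field_simps)
  moreover have "U^2 = (of_int x + 1) / 2"
    unfolding U_def W_def power_mult_distrib power_divide n(1)[symmetric] using p_pos
    by (simp add: power2_eq_square)
  ultimately have UW: "U^2 - W^2 = 1" "(U + W)^2 = e"
    using pell_unit_as_square[OF pell(1)] pell(2) unfolding e by simp_all
  have K: "U \<in> triquad_field p q" "W \<in> triquad_field p q"
    unfolding U_def W_def
    by (rule triquad_field_Rats_mult[OF c(1) triquad_field_monomials(2)],
        rule triquad_field_Rats_mult[OF c(2) triquad_field_monomials(5)])
  show ?thesis
    using rel_norm_tuple[OF K \<tau>1_monomials(2)[OF c(1), folded U_def] \<tau>1_monomials(5)[OF c(2), folded W_def]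
        \<tau>2_monomials(2)[OF c(1), folded U_def] \<tau>2_monomials(5)[OF c(2), folded W_def]
        \<tau>3_monomials(2)[OF c(1), folded U_def] \<tau>3_monomials(5)[OF c(2), folded W_def] _ _ _ _ _ _ UW(1)]
      \<eta> UW(2) by (simp add: rel_norm_value_def)
qed

lemma rel_norm_tuple_pq_sq_x_minus_1:
  fixes x y :: int and e \<eta> :: real
  assumes pell: "x^2 - int (p * q) * y^2 = 1" "2 \<le> x"
    and e: "e = of_int x + of_int y * sqrt (real (p * q))" and \<eta>: "\<eta>^2 = e"
    and sq: "is_nat_square (x - 1)"
  shows "(\<eta> * \<tau>2 \<eta>, \<eta> * \<tau>1 (\<tau>2 \<eta>), \<eta> * \<tau>1 (\<tau>3 \<eta>), \<eta> * \<tau>2 (\<tau>3 \<eta>), \<eta> * \<tau>1 \<eta>)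
    = (-1, 1, 1, e, -e)"
proof -
  obtain n :: nat where n: "of_int x - 1 = real n ^ 2" "0 < n"
    using sq pell(2) by (elim is_nat_square_posE) auto
  define U W where "U = of_int y / (2 * real n) * (sqrt 2 * sqrt (real p) * sqrt (real q))"
    and "W = real n / 2 * sqrt 2"
  have c: "of_int y / (2 * real n) \<in> \<rat>" "real n / 2 \<in> \<rat>" by simp_all
  have "2 * U * W = of_int y * sqrt (real (p * q))"
    using n(2) by (simp add: U_def W_def real_sqrt_mult field_simps)
  moreover have "W^2 = (of_int x - 1) / 2" using n(1) by (simp add: U_def W_def power_mult_distrib power_divide field_simps)
  ultimately have UW: "U^2 - W^2 = 1" "(U + W)^2 = e"
    using pell_unit_as_square[OF pell(1)] pell(2) unfolding e by simp_all
  have K: "U \<in> triquad_field p q" "W \<in> triquad_field p q"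
    unfolding U_def W_def
    by (rule triquad_field_Rats_mult[OF c(1) triquad_field_monomials(7)],
        rule triquad_field_Rats_mult[OF c(2) triquad_field_monomials(1)])
  show ?thesis
    using rel_norm_tuple[OF K \<tau>1_monomials(7)[OF c(1), folded U_def] \<tau>1_monomials(1)[OF c(2), folded W_def]
        \<tau>2_monomials(7)[OF c(1), folded U_def] \<tau>2_monomials(1)[OF c(2), folded W_def]
        \<tau>3_monomials(7)[OF c(1), folded U_def] \<tau>3_monomials(1)[OF c(2), folded W_def] _ _ _ _ _ _ UW(1)]
      \<eta> UW(2) by (simp add: rel_norm_value_def)
qed

lemma rel_norm_tuple_pq_sq_p_x_minus_1:
  fixes x y :: int and e \<eta> :: real
  assumes pell: "x^2 - int (p * q) * y^2 = 1" "2 \<le> x"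
    and e: "e = of_int x + of_int y * sqrt (real (p * q))" and \<eta>: "\<eta>^2 = e"
    and sq: "is_nat_square (int p * (x - 1))"
  shows "(\<eta> * \<tau>2 \<eta>, \<eta> * \<tau>1 (\<tau>2 \<eta>), \<eta> * \<tau>1 (\<tau>3 \<eta>), \<eta> * \<tau>2 (\<tau>3 \<eta>), \<eta> * \<tau>1 \<eta>)
    = (1, -1, 1, -e, -e)"
proof -
  obtain n :: nat where n: "real p * (of_int x - 1) = real n ^ 2" "0 < n"
    using sq pell(2) p_pos by (elim is_nat_square_posE) auto
  define U W where "U = real p * of_int y / (2 * real n) * (sqrt 2 * sqrt (real q))"
    and "W = real n / (2 * real p) * (sqrt 2 * sqrt (real p))"
  have c: "real p * of_int y / (2 * real n) \<in> \<rat>" "real n / (2 * real p) \<in> \<rat>" by simp_all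
  have "2 * U * W = of_int y * sqrt (real (p * q))"
    using n(2) p_pos by (simp add: U_def W_def real_sqrt_mult field_simps)
  moreover have "W^2 = (of_int x - 1) / 2"
    unfolding U_def W_def power_mult_distrib power_divide n(1)[symmetric] using p_pos
    by (simp add: power2_eq_square)
  ultimately have UW: "U^2 - W^2 = 1" "(U + W)^2 = e"
    using pell_unit_as_square[OF pell(1)] pell(2) unfolding e by simp_all
  have K: "U \<in> triquad_field p q" "W \<in> triquad_field p q"
    unfolding U_def W_def
    by (rule triquad_field_Rats_mult[OF c(1) triquad_field_monomials(5)],
        rule triquad_field_Rats_mult[OF c(2) triquad_field_monomials(4)])
  show ?thesis
    using rel_norm_tuple[OF K \<tau>1_monomials(5)[OF c(1), folded U_def] \<tau>1_monomials(4)[OF c(2), folded W_def]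
        \<tau>2_monomials(5)[OF c(1), folded U_def] \<tau>2_monomials(4)[OF c(2), folded W_def]
        \<tau>3_monomials(5)[OF c(1), folded U_def] \<tau>3_monomials(4)[OF c(2), folded W_def] _ _ _ _ _ _ UW(1)]
      \<eta> UW(2) by (simp add: rel_norm_value_def)
qed

lemma rel_norm_tuple_pq_sq_2p_x_plus_1:
  fixes x y :: int and e \<eta> :: real
  assumes pell: "x^2 - int (p * q) * y^2 = 1" "2 \<le> x"
    and e: "e = of_int x + of_int y * sqrt (real (p * q))" and \<eta>: "\<eta>^2 = e"
    and sq: "is_nat_square (2 * int p * (x + 1))"
  shows "(\<eta> * \<tau>2 \<eta>, \<eta> * \<tau>1 (\<tau>2 \<eta>), \<eta> * \<tau>1 (\<tau>3 \<eta>), \<eta> * \<tau>2 (\<tau>3 \<eta>), \<eta> * \<tau>1 \<eta>)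
    = (-1, -1, 1, -e, e)"
proof -
  obtain n :: nat where n: "2 * real p * (of_int x + 1) = real n ^ 2" "0 < n"
    using sq pell(2) p_pos by (elim is_nat_square_posE) auto
  define U W where "U = real n / (2 * real p) * sqrt (real p)"
    and "W = real p * of_int y / real n * sqrt (real q)"
  have c: "real n / (2 * real p) \<in> \<rat>" "real p * of_int y / real n \<in> \<rat>" by simp_all
  have "2 * U * W = of_int y * sqrt (real (p * q))"
    using n(2) p_pos by (simp add: U_def W_def real_sqrt_mult field_simps)
  moreover have "U^2 = (of_int x + 1) / 2"
    unfolding U_def W_def power_mult_distrib power_divide n(1)[symmetric] using p_pos
    by (simp add: power2_eq_square)
  ultimately have UW: "U^2 - W^2 = 1" "(U + W)^2 = e"
    using pell_unit_as_square[OF pell(1)] pell(2) unfolding e by simp_all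
  have K: "U \<in> triquad_field p q" "W \<in> triquad_field p q"
    unfolding U_def W_def
    by (rule triquad_field_Rats_mult[OF c(1) triquad_field_monomials(2)],
        rule triquad_field_Rats_mult[OF c(2) triquad_field_monomials(3)])
  show ?thesis
    using rel_norm_tuple[OF K \<tau>1_monomials(2)[OF c(1), folded U_def] \<tau>1_monomials(3)[OF c(2), folded W_def]
        \<tau>2_monomials(2)[OF c(1), folded U_def] \<tau>2_monomials(3)[OF c(2), folded W_def]
        \<tau>3_monomials(2)[OF c(1), folded U_def] \<tau>3_monomials(3)[OF c(2), folded W_def] _ _ _ _ _ _ UW(1)]
      \<eta> UW(2) by (simp add: rel_norm_value_def)
qed

end


lemma prime_square_not_dvd:
  fixes p q c :: nat
  assumes "prime p" "prime q" "p \<noteq> q" "p \<noteq> 2" "c dvd 2"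
  shows "\<not> p^2 dvd c * p * q"
proof
  assume "p^2 dvd c * p * q"
  hence "p dvd c * q" using prime_gt_0_nat[OF assms(1)] by (simp add: power2_eq_square mult.assoc mult.left_commute)
  hence "p dvd c \<or> p dvd q" using prime_dvd_mult_iff[OF assms(1)] by blast
  thus False
    using assms dvd_trans[of p c 2] primes_dvd_imp_eq[OF assms(1,2)] primes_dvd_imp_eq[OF assms(1) two_is_prime_nat]
    by blast
qed

theorem mainTheorem5:
  fixes p q :: nat and x y v w :: int and \<tau>1 \<tau>2 \<tau>3 :: "real \<Rightarrow> real"
  assumes "prime p" and "prime q" and "p mod 8 = 1" and "q mod 8 = 3"
    and "Legendre (int p) (int q) = 1"
    and eps1: "fund_unit (2 * p * q) = real_of_int x + real_of_int y * sqrt (real (2 * p * q))"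
    and eps2: "fund_unit (p * q) = real_of_int v + real_of_int w * sqrt (real (p * q))"
    and t1: "field_aut (triquad_field p q) \<tau>1" "\<tau>1 (sqrt 2) = - sqrt 2"
            "\<tau>1 (sqrt (real p)) = sqrt (real p)" "\<tau>1 (sqrt (real q)) = sqrt (real q)"
    and t2: "field_aut (triquad_field p q) \<tau>2" "\<tau>2 (sqrt 2) = sqrt 2"
            "\<tau>2 (sqrt (real p)) = - sqrt (real p)" "\<tau>2 (sqrt (real q)) = sqrt (real q)"
    and t3: "field_aut (triquad_field p q) \<tau>3" "\<tau>3 (sqrt 2) = sqrt 2"
            "\<tau>3 (sqrt (real p)) = sqrt (real p)" "\<tau>3 (sqrt (real q)) = - sqrt (real q)"
  shows
    "(\<exists>\<eta>\<in>triquad_field p q. \<eta>\<^sup>2 = fund_unit (2 * p * q)) \<and>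
     (\<exists>\<eta>\<in>triquad_field p q. \<eta>\<^sup>2 = fund_unit (p * q)) \<and>
     (\<forall>\<eta>\<in>triquad_field p q. \<eta>\<^sup>2 = fund_unit (2 * p * q) \<longrightarrow>
        (let e = fund_unit (2 * p * q);
             T = (\<eta> * \<tau>2 \<eta>, \<eta> * \<tau>1 (\<tau>2 \<eta>), \<eta> * \<tau>1 (\<tau>3 \<eta>), \<eta> * \<tau>2 (\<tau>3 \<eta>), \<eta> * \<tau>1 \<eta>)
         in (is_nat_square (x - 1) \<longrightarrow> T = (-1, -e, -e, e, 1)) \<and>
            (is_nat_square (int p * (x - 1)) \<longrightarrow> T = (1, e, -e, -e, 1)) \<and>
            (is_nat_square (2 * int p * (x + 1)) \<longrightarrow> T = (-1, -e, e, -e, 1)))) \<and>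
     (\<forall>\<eta>\<in>triquad_field p q. \<eta>\<^sup>2 = fund_unit (p * q) \<longrightarrow>
        (let e = fund_unit (p * q);
             T = (\<eta> * \<tau>2 \<eta>, \<eta> * \<tau>1 (\<tau>2 \<eta>), \<eta> * \<tau>1 (\<tau>3 \<eta>), \<eta> * \<tau>2 (\<tau>3 \<eta>), \<eta> * \<tau>1 \<eta>)
         in (is_nat_square (v - 1) \<longrightarrow> T = (-1, 1, 1, e, -e)) \<and>
            (is_nat_square (int p * (v - 1)) \<longrightarrow> T = (1, -1, 1, -e, -e)) \<and>
            (is_nat_square (2 * int p * (v + 1)) \<longrightarrow> T = (-1, -1, 1, -e, e))))"
proof -
  interpret triquad_galois p q \<tau>1 \<tau>2 \<tau>3
    using t1 t2 t3 prime_gt_0_nat[OF assms(1)] by unfold_locales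
  have pq: "p \<noteq> q" "p \<noteq> 2" "odd (p * q)" "q mod 4 = 3" using assms(3,4) by (auto, presburger+)
  have irr: "sqrt (real (c * p * q)) \<notin> \<rat>" if "c dvd 2" for c
    by (rule sqrt_notin_Rats_if_simple_prime_factor[OF assms(1) _ prime_square_not_dvd[OF assms(1,2) pq(1,2) that]])
      simp
  have no_neg: "a^2 - int (c * p * q) * b^2 \<noteq> -1" for a b c
    by (rule pell_minus_one_unsolvable[OF assms(2) pq(4)]) simp
  have pell: "x^2 - int (2 * p * q) * y^2 = 1" "2 \<le> x" "1 \<le> y"
    "v^2 - int (p * q) * w^2 = 1" "2 \<le> v" "1 \<le> w"
    using fund_unit_pell_coordinates[OF irr[OF dvd_refl] no_neg eps1]
      fund_unit_pell_coordinates[OF irr[OF one_dvd, unfolded mult_1] no_neg[of _ 1, unfolded mult_1] eps2]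
    by simp_all
  have "p * q dvd 2 * p * q" by simp
  show ?thesis
    unfolding Let_def eps1 eps2
    using pell_unit_square_in_triquad_field[OF assms(1,2) pq(3) dvd_refl pell(1-3)]
      pell_unit_square_in_triquad_field[OF assms(1,2) pq(3) \<open>p * q dvd 2 * p * q\<close> pell(4-6)]
      rel_norm_tuple_2pq_sq_x_minus_1[OF pell(1,2) refl] rel_norm_tuple_2pq_sq_p_x_minus_1[OF pell(1,2) refl]
      rel_norm_tuple_2pq_sq_2p_x_plus_1[OF pell(1,2) refl] rel_norm_tuple_pq_sq_x_minus_1[OF pell(4,5) refl]
      rel_norm_tuple_pq_sq_p_x_minus_1[OF pell(4,5) refl] rel_norm_tuple_pq_sq_2p_x_plus_1[OF pell(4,5) refl]
    by blast
qed

end
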